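(* Let $G$ be a discrete group, let $X$ and $Y$ be minimal $G$-flows with $Y$ essentially free, and let $\pi\colon X\to Y$ be a continuous surjective $G$-equivariant map. If $Y$ has the separated covering property, then so does $X$.
   Context: A $G$-flow is a compact Hausdorff space with an action of $G$ by homeomorphisms; it is minimal if every orbit is dense, and essentially free if for every $g\in G\setminus\{e\}$ the set $\{x: g\cdot x=x\}$ has empty interior. For finite $D\subseteq G$, a set $S\subseteq G$ is $D$-separated if $Dg\cap Dh=\emptyset$ for all distinct $g,h\in S$. A minimal $G$-flow $X$ has the separated covering property if for every finite $D\subseteq G$ and every non-empty open $U\subseteq X$ there exists a $D$-separated $S\subseteq G$ with $S^{-1}U=X$. *)

theory Defs
  imports "HOL-Analysis.Analysis"
begin

text \<open>A (discrete) group G is modelled as a type of class group_add (group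
operation written +, identity 0, inverse uminus; commutativity is NOT assumed).\<close>

definition G_flow :: "('g::group_add \<Rightarrow> 'a \<Rightarrow> 'a) \<Rightarrow> 'a topology \<Rightarrow> bool" where
  "G_flow act X \<longleftrightarrow> compact_space X \<and> Hausdorff_space X
     \<and> (\<forall>g. homeomorphic_map X X (act g))
     \<and> (\<forall>x\<in>topspace X. act 0 x = x)
     \<and> (\<forall>g h. \<forall>x\<in>topspace X. act (g + h) x = act g (act h x))"

definition minimal_flow :: "('g::group_add \<Rightarrow> 'a \<Rightarrow> 'a) \<Rightarrow> 'a topology \<Rightarrow> bool" where
  "minimal_flow act X \<longleftrightarrow> G_flow act X
     \<and> (\<forall>x\<in>topspace X. X closure_of (range (\<lambda>g. act g x)) = topspace X)"

definition essentially_free :: "('g::group_add \<Rightarrow> 'a \<Rightarrow> 'a) \<Rightarrow> 'a topology \<Rightarrow> bool" where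
  "essentially_free act X \<longleftrightarrow>
     (\<forall>g. g \<noteq> 0 \<longrightarrow> X interior_of {x \<in> topspace X. act g x = x} = {})"

definition separated :: "'g::group_add set \<Rightarrow> 'g set \<Rightarrow> bool" where
  "separated D S \<longleftrightarrow>
     (\<forall>g\<in>S. \<forall>h\<in>S. g \<noteq> h \<longrightarrow> ((\<lambda>d. d + g) ` D) \<inter> ((\<lambda>d. d + h) ` D) = {})"

definition separated_covering_property ::
    "('g::group_add \<Rightarrow> 'a \<Rightarrow> 'a) \<Rightarrow> 'a topology \<Rightarrow> bool" where
  "separated_covering_property act X \<longleftrightarrow>
     (\<forall>D U. finite D \<and> openin X U \<and> U \<noteq> {} \<longrightarrow>
        (\<exists>S. separated D S \<and> {act (- s) x | s x. s \<in> S \<and> x \<in> U} = topspace X))"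

end

theory Submission
  imports Defs
begin

text \<open>Given finite D and nonempty open U in X, essential freeness of Y gives a point of U
whose image y0 is moved by every nonzero difference -d' + d of elements of D, so y0 has a
neighbourhood V0 inside a closed set C disjoint from its translates by these differences.
Cover X by finitely many translates -f U' of U' = U \<inter> pi^-1(V0) and keep the set F1 of those
f with f y0 in C; it is D-separated. Near y0 only the translates by F1 can meet C, so a
(D + F1)-separated set S covering Y by translates of a small neighbourhood V of y0 yields the
D-separated set F1 + S covering X by translates of U.\<close>

lemma G_flow_continuous_map: "G_flow act X \<Longrightarrow> continuous_map X X (act g)"
  unfolding G_flow_def by (blast intro: homeomorphic_imp_continuous_map)

lemma G_flow_in_topspace: "G_flow act X \<Longrightarrow> x \<in> topspace X \<Longrightarrow> act g x \<in> topspace X"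
  using G_flow_continuous_map[of act X g] by (auto simp: continuous_map_def)

lemma G_flow_add: "G_flow act X \<Longrightarrow> x \<in> topspace X \<Longrightarrow> act (g + h) x = act g (act h x)"
  unfolding G_flow_def by blast

lemma G_flow_minus_left: "G_flow act X \<Longrightarrow> x \<in> topspace X \<Longrightarrow> act (- g) (act g x) = x"
  by (metis G_flow_def G_flow_add left_minus)

lemma G_flow_minus_right: "G_flow act X \<Longrightarrow> x \<in> topspace X \<Longrightarrow> act g (act (- g) x) = x"
  by (metis G_flow_def G_flow_add right_minus)

lemma G_flow_openin_image: "G_flow act X \<Longrightarrow> openin X U \<Longrightarrow> openin X (act g ` U)"
  unfolding G_flow_def by (meson homeomorphic_map_openness openin_subset)

lemma G_flow_closedin_fixed_points:
  assumes "G_flow act X"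
  shows "closedin X {x \<in> topspace X. act g x = x}"
  using assms closedin_continuous_maps_eq[OF _ G_flow_continuous_map[OF assms] continuous_map_id]
  by (simp add: G_flow_def)

lemma minimal_flow_finite_translates_cover:
  assumes minimal: "minimal_flow act X" and U: "openin X U" "U \<noteq> {}"
  shows "\<exists>F. finite F \<and> topspace X \<subseteq> (\<Union>g\<in>F. act (- g) ` U)"
proof -
  have flow: "G_flow act X" using minimal minimal_flow_def by blast
  have orbit_meets_U: "\<exists>g. act g x \<in> U" if x: "x \<in> topspace X" for x
  proof (rule ccontr)
    assume "\<nexists>g. act g x \<in> U"
    then have "range (\<lambda>g. act g x) \<subseteq> topspace X - U"
      using G_flow_in_topspace[OF flow x] by auto
    then have "X closure_of range (\<lambda>g. act g x) \<subseteq> topspace X - U"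
      using U(1) by (simp add: closure_of_minimal closedin_diff)
    then have "topspace X \<subseteq> topspace X - U"
      using minimal x unfolding minimal_flow_def by simp
    then show False using U openin_subset by blast
  qed
  have "topspace X \<subseteq> (\<Union>g. act (- g) ` U)"
  proof
    fix x assume x: "x \<in> topspace X"
    then obtain g where "act g x \<in> U" using orbit_meets_U by blast
    then show "x \<in> (\<Union>g. act (- g) ` U)"
      using G_flow_minus_left[OF flow x, of g] by (metis UN_iff UNIV_I image_eqI)
  qed
  then have "\<exists>\<F>. finite \<F> \<and> \<F> \<subseteq> range (\<lambda>g. act (- g) ` U) \<and> topspace X \<subseteq> \<Union>\<F>"
    using flow G_flow_openin_image[OF flow U(1)] unfolding G_flow_def compact_space_alt
    by (metis (no_types, lifting) imageE)
  then show ?thesis by (metis finite_subset_image)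
qed

lemma interior_of_finite_Union_closedin_empty:
  assumes "finite C" "\<And>c. c \<in> C \<Longrightarrow> closedin X (A c)" "\<And>c. c \<in> C \<Longrightarrow> X interior_of A c = {}"
  shows "X interior_of (\<Union>c\<in>C. A c) = {}"
  using assms by (induction C rule: finite_induct) (auto simp: interior_of_union_eq_empty)

lemma separated_add:
  assumes F: "separated D F" and S: "separated ((\<lambda>(d, f). d + f) ` (D \<times> F)) S"
  shows "separated D ((\<lambda>(f, s). f + s) ` (F \<times> S))"
  unfolding separated_def
proof (intro ballI impI)
  fix g h assume "g \<in> (\<lambda>(f, s). f + s) ` (F \<times> S)" "h \<in> (\<lambda>(f, s). f + s) ` (F \<times> S)" "g \<noteq> h"
  then obtain f s f' s' where fs: "f \<in> F" "s \<in> S" "g = f + s" and fs': "f' \<in> F" "s' \<in> S" "h = f' + s'"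
    and "g \<noteq> h" by auto
  show "(\<lambda>d. d + g) ` D \<inter> (\<lambda>d. d + h) ` D = {}"
  proof (rule ccontr)
    assume "(\<lambda>d. d + g) ` D \<inter> (\<lambda>d. d + h) ` D \<noteq> {}"
    then obtain d d' where d: "d \<in> D" "d' \<in> D" and eq: "(d + f) + s = (d' + f') + s'"
      using fs(3) fs'(3) by (auto simp: add.assoc)
    show False
    proof (cases "s = s'")
      case True
      then have "d + f = d' + f'" using eq by simp
      then have "f = f'" using F d fs(1) fs'(1) unfolding separated_def by blast
      then show False using True fs(3) fs'(3) \<open>g \<noteq> h\<close> by simp
    next
      case False
      then have "(\<lambda>x. x + s) ` ((\<lambda>(d, f). d + f) ` (D \<times> F)) \<inter>
                 (\<lambda>x. x + s') ` ((\<lambda>(d, f). d + f) ` (D \<times> F)) = {}"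
        using S fs(2) fs'(2) unfolding separated_def by blast
      then show False using eq d fs(1) fs'(1) by blast
    qed
  qed
qed

lemma exists_wandering_nbhd:
  assumes flow: "G_flow act Y" and B: "finite B" and y: "y \<in> topspace Y"
    and moved: "\<forall>b\<in>B. act b y \<noteq> y"
  shows "\<exists>N. openin Y N \<and> y \<in> N \<and> (\<forall>b\<in>B. \<forall>z\<in>N. act b z \<notin> N)"
proof -
  have "\<exists>N. openin Y N \<and> y \<in> N \<and> (\<forall>z\<in>N. act b z \<notin> N)" if b: "b \<in> B" for b
  proof -
    obtain W P where WP: "openin Y W" "openin Y P" "y \<in> W" "act b y \<in> P" "disjnt W P"
      using flow moved b y G_flow_in_topspace[OF flow y]
      unfolding G_flow_def Hausdorff_space_def by metis
    show ?thesis
    proof (intro exI conjI)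
      show "openin Y (W \<inter> {z \<in> topspace Y. act b z \<in> P})"
        using WP(1) openin_continuous_map_preimage[OF G_flow_continuous_map[OF flow] WP(2)]
        by (rule openin_Int)
    qed (use WP y in \<open>auto simp: disjnt_iff\<close>)
  qed
  then obtain N where N: "\<And>b. b \<in> B \<Longrightarrow> openin Y (N b) \<and> y \<in> N b \<and> (\<forall>z\<in>N b. act b z \<notin> N b)"
    by metis
  show ?thesis
  proof (intro exI conjI)
    show "openin Y ((\<Inter>b\<in>B. N b) \<inter> topspace Y)" using B N by (blast intro: openin_INT)
  qed (use N y in blast)+
qed

lemma exists_closed_wandering_nbhd:
  assumes flow: "G_flow act Y" and B: "finite B" and y: "y \<in> topspace Y"
    and moved: "\<forall>b\<in>B. act b y \<noteq> y"
  shows "\<exists>V C. openin Y V \<and> y \<in> V \<and> closedin Y C \<and> V \<subseteq> C \<and> (\<forall>b\<in>B. \<forall>z\<in>C. act b z \<notin> C)"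
proof -
  obtain N where N: "openin Y N" "y \<in> N" and wandering: "\<forall>b\<in>B. \<forall>z\<in>N. act b z \<notin> N"
    using exists_wandering_nbhd[OF assms] by blast
  have "regular_space Y"
    using flow by (simp add: G_flow_def compact_Hausdorff_imp_regular_space)
  then have "neighbourhood_base_of (closedin Y) Y" by (simp add: neighbourhood_base_of_closedin)
  then obtain V C where "openin Y V" "closedin Y C" "y \<in> V" "V \<subseteq> C" "C \<subseteq> N"
    using N unfolding neighbourhood_base_of by (elim allE[of _ N] allE[of _ y]) blast
  moreover have "\<forall>b\<in>B. \<forall>z\<in>C. act b z \<notin> C" using \<open>C \<subseteq> N\<close> wandering by blast
  ultimately show ?thesis by blast
qed

lemma separated_if_translates_in_wandering:
  assumes flow: "G_flow act Y" and y: "y \<in> topspace Y"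
    and differences: "\<forall>d\<in>D. \<forall>d'\<in>D. d \<noteq> d' \<longrightarrow> - d' + d \<in> B"
    and wandering: "\<forall>b\<in>B. \<forall>z\<in>N. act b z \<notin> N"
    and translates: "\<forall>f\<in>F. act f y \<in> N"
  shows "separated D F"
  unfolding separated_def
proof (intro ballI impI)
  fix f f' assume f: "f \<in> F" "f' \<in> F" "f \<noteq> f'"
  show "(\<lambda>d. d + f) ` D \<inter> (\<lambda>d. d + f') ` D = {}"
  proof (rule ccontr)
    assume "(\<lambda>d. d + f) ` D \<inter> (\<lambda>d. d + f') ` D \<noteq> {}"
    then obtain d d' where d: "d \<in> D" "d' \<in> D" and eq: "d + f = d' + f'" by auto
    then have "f' = (- d' + d) + f" by (metis add.assoc add_minus_cancel)
    then have "act f' y = act (- d' + d) (act f y)" using G_flow_add[OF flow y] by simp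
    moreover have "d \<noteq> d'" using eq f(3) by auto
    then have "- d' + d \<in> B" using differences d by blast
    ultimately show False using wandering translates f by metis
  qed
qed

lemma G_flow_nbhd_avoiding_closed:
  assumes flow: "G_flow act Y" and C: "closedin Y C" and F: "finite F" and y: "y \<in> topspace Y"
  shows "\<exists>V. openin Y V \<and> y \<in> V \<and> (\<forall>f\<in>F. \<forall>v\<in>V. act f v \<in> C \<longrightarrow> act f y \<in> C)"
proof (intro exI conjI)
  let ?V = "(\<Inter>f\<in>{f \<in> F. act f y \<notin> C}. {v \<in> topspace Y. act f v \<in> topspace Y - C}) \<inter> topspace Y"
  show "openin Y ?V"
    using F openin_continuous_map_preimage[OF G_flow_continuous_map[OF flow] openin_diff[OF openin_topspace C]]
    by (auto intro: openin_INT)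
qed (use y G_flow_in_topspace[OF flow y] in auto)

locale factor_map =
  fixes actX :: "'g::group_add \<Rightarrow> 'a \<Rightarrow> 'a" and actY :: "'g \<Rightarrow> 'b \<Rightarrow> 'b"
    and X :: "'a topology" and Y :: "'b topology" and \<pi> :: "'a \<Rightarrow> 'b"
  assumes minimal_X: "minimal_flow actX X"
    and flow_Y: "G_flow actY Y"
    and continuous: "continuous_map X Y \<pi>"
    and surjective: "\<pi> ` topspace X = topspace Y"
    and equivariant: "\<forall>g. \<forall>x\<in>topspace X. \<pi> (actX g x) = actY g (\<pi> x)"
begin

lemma flow_X: "G_flow actX X"
  using minimal_X minimal_flow_def by blast

text \<open>Otherwise finitely many translates of U would put every point of Y into the
fixed-point set of a conjugate of some b \<in> B, and Y would be a finite union of closed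
sets with empty interior.\<close>

lemma exists_point_with_free_image:
  assumes free: "essentially_free actY Y" and B: "finite B" "0 \<notin> B"
    and U: "openin X U" "U \<noteq> {}"
  shows "\<exists>x\<in>U. \<forall>b\<in>B. actY b (\<pi> x) \<noteq> \<pi> x"
proof (rule ccontr)
  assume "\<not> ?thesis"
  then have fixed: "\<forall>u\<in>U. \<exists>b\<in>B. actY b (\<pi> u) = \<pi> u" by blast
  have U_sub: "U \<subseteq> topspace X" using U(1) openin_subset by blast
  obtain F where F: "finite F" and F_cover: "topspace X \<subseteq> (\<Union>g\<in>F. actX (- g) ` U)"
    using minimal_flow_finite_translates_cover[OF minimal_X U] by blast
  define Fix where "Fix c = {y \<in> topspace Y. actY c y = y}" for c
  define C where "C = (\<lambda>(g, b). - g + b + g) ` (F \<times> B)"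
  have "topspace Y \<subseteq> (\<Union>c\<in>C. Fix c)"
  proof
    fix y assume y: "y \<in> topspace Y"
    then obtain g u where gu: "g \<in> F" "u \<in> U" "y = \<pi> (actX (- g) u)"
      using surjective F_cover by blast
    obtain b where b: "b \<in> B" "actY b (\<pi> u) = \<pi> u" using fixed gu(2) by blast
    have u: "\<pi> u \<in> topspace Y" using surjective U_sub gu(2) by blast
    have y_eq: "y = actY (- g) (\<pi> u)" using equivariant U_sub gu by blast
    have "actY (- g + b + g) y = actY (- g) (actY b (actY g y))"
      using G_flow_add[OF flow_Y] G_flow_in_topspace[OF flow_Y] y by simp
    also have "\<dots> = y" using y_eq b(2) G_flow_minus_right[OF flow_Y u] by simp
    finally show "y \<in> (\<Union>c\<in>C. Fix c)"
      using gu(1) b(1) y unfolding C_def Fix_def by force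
  qed
  moreover have "Y interior_of (\<Union>c\<in>C. Fix c) = {}"
  proof (rule interior_of_finite_Union_closedin_empty)
    show "finite C" using F B(1) by (simp add: C_def)
    show "closedin Y (Fix c)" for c
      unfolding Fix_def by (rule G_flow_closedin_fixed_points[OF flow_Y])
    show "Y interior_of Fix c = {}" if "c \<in> C" for c
    proof -
      obtain g b where "b \<in> B" "c = - g + b + g" using \<open>c \<in> C\<close> C_def by auto
      then have "c \<noteq> 0" using B(2) by (metis add_minus_cancel add_right_cancel neg_eq_iff_add_eq_0)
      then show ?thesis using free unfolding essentially_free_def Fix_def by blast
    qed
  qed
  ultimately have "topspace Y = {}"
    using interior_of_mono[of "topspace Y" "\<Union>c\<in>C. Fix c" Y] by simp
  then show False using U U_sub surjective by blast
qed

lemma covering_lift: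
  assumes U: "U' \<subseteq> U" "U \<subseteq> topspace X" and F_cover: "topspace X \<subseteq> (\<Union>f\<in>F. actX (- f) ` U')"
    and image_U': "\<pi> ` U' \<subseteq> C" and V: "V \<subseteq> topspace Y"
    and S_cover: "{actY (- s) v |s v. s \<in> S \<and> v \<in> V} = topspace Y"
    and hits_C: "\<forall>f\<in>F. \<forall>v\<in>V. actY f v \<in> C \<longrightarrow> f \<in> F\<^sub>1"
  shows "{actX (- g) u |g u. g \<in> (\<lambda>(f, s). f + s) ` (F\<^sub>1 \<times> S) \<and> u \<in> U} = topspace X"
proof
  show "{actX (- g) u |g u. g \<in> (\<lambda>(f, s). f + s) ` (F\<^sub>1 \<times> S) \<and> u \<in> U} \<subseteq> topspace X"
    using U(2) G_flow_in_topspace[OF flow_X] by auto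
next
  show "topspace X \<subseteq> {actX (- g) u |g u. g \<in> (\<lambda>(f, s). f + s) ` (F\<^sub>1 \<times> S) \<and> u \<in> U}"
  proof
    fix x assume x: "x \<in> topspace X"
    then have "\<pi> x \<in> topspace Y" using surjective by blast
    then obtain s v where sv: "s \<in> S" "v \<in> V" "\<pi> x = actY (- s) v" using S_cover by blast
    define z where "z = actX s x"
    have z: "z \<in> topspace X" unfolding z_def using G_flow_in_topspace[OF flow_X x] .
    then obtain f u where fu: "f \<in> F" "u \<in> U'" "z = actX (- f) u" using F_cover by blast
    have u: "u \<in> topspace X" using U fu(2) by blast
    have "\<pi> z = actY s (actY (- s) v)" using equivariant x sv(3) by (simp add: z_def)
    also have "\<dots> = v" using G_flow_minus_right[OF flow_Y] V sv(2) by blast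
    finally have \<pi>z: "\<pi> z = v" .
    have "\<pi> u = \<pi> (actX f z)" using fu(3) G_flow_minus_right[OF flow_X u, of f] by simp
    also have "\<dots> = actY f v" using equivariant z \<pi>z by simp
    finally have "\<pi> u = actY f v" .
    then have "actY f v \<in> C" using image_U' fu(2) by auto
    then have "f \<in> F\<^sub>1" using hits_C fu(1) sv(2) by blast
    moreover have "actX (- (f + s)) u = x"
    proof -
      have "actX (- (f + s)) u = actX (- s) (actX (- f) u)"
        unfolding minus_add by (rule G_flow_add[OF flow_X u])
      also have "\<dots> = x" using G_flow_minus_left[OF flow_X x] by (simp add: fu(3)[symmetric] z_def)
      finally show ?thesis .
    qed
    moreover have "f + s \<in> (\<lambda>(f, s). f + s) ` (F\<^sub>1 \<times> S)" if "f \<in> F\<^sub>1"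
      using that sv(1) by force
    moreover have "u \<in> U" using U(1) fu(2) by blast
    ultimately show "x \<in> {actX (- g) u |g u. g \<in> (\<lambda>(f, s). f + s) ` (F\<^sub>1 \<times> S) \<and> u \<in> U}"
      by blast
  qed
qed

lemma separated_covering_property_lift:
  assumes free: "essentially_free actY Y" and scp: "separated_covering_property actY Y"
  shows "separated_covering_property actX X"
  unfolding separated_covering_property_def
proof (intro allI impI, elim conjE)
  fix D :: "'g set" and U :: "'a set" assume D: "finite D" and U: "openin X U" "U \<noteq> {}"
  have U_sub: "U \<subseteq> topspace X" using U(1) openin_subset by blast
  define B where "B = (\<lambda>(d, d'). - d' + d) ` (D \<times> D) - {0}"
  have B: "finite B" "0 \<notin> B" using D by (auto simp: B_def)
  have differences: "\<forall>d\<in>D. \<forall>d'\<in>D. d \<noteq> d' \<longrightarrow> - d' + d \<in> B"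
  proof (intro ballI impI)
    fix d d' assume "d \<in> D" "d' \<in> D" "d \<noteq> d'"
    moreover have "- d' + d \<noteq> 0" using \<open>d \<noteq> d'\<close> by (metis add.right_neutral add_minus_cancel)
    ultimately show "- d' + d \<in> B" unfolding B_def by force
  qed
  obtain x\<^sub>0 where "x\<^sub>0 \<in> U" and free_x\<^sub>0: "\<forall>b\<in>B. actY b (\<pi> x\<^sub>0) \<noteq> \<pi> x\<^sub>0"
    using exists_point_with_free_image[OF free B U] by blast
  define y\<^sub>0 where "y\<^sub>0 = \<pi> x\<^sub>0"
  have y\<^sub>0: "y\<^sub>0 \<in> topspace Y" using \<open>x\<^sub>0 \<in> U\<close> U_sub surjective y\<^sub>0_def by blast
  obtain V\<^sub>0 C where V\<^sub>0: "openin Y V\<^sub>0" "y\<^sub>0 \<in> V\<^sub>0" and C: "closedin Y C" "V\<^sub>0 \<subseteq> C"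
    and wandering: "\<forall>b\<in>B. \<forall>z\<in>C. actY b z \<notin> C"
    using exists_closed_wandering_nbhd[OF flow_Y B(1) y\<^sub>0] free_x\<^sub>0 y\<^sub>0_def by blast
  define U' where "U' = U \<inter> {x \<in> topspace X. \<pi> x \<in> V\<^sub>0}"
  have U': "openin X U'" "U' \<noteq> {}"
    using openin_Int[OF U(1) openin_continuous_map_preimage[OF continuous V\<^sub>0(1)]]
      \<open>x\<^sub>0 \<in> U\<close> U_sub V\<^sub>0(2) y\<^sub>0_def by (auto simp: U'_def)
  obtain F where F: "finite F" and F_cover: "topspace X \<subseteq> (\<Union>f\<in>F. actX (- f) ` U')"
    using minimal_flow_finite_translates_cover[OF minimal_X U'] by blast
  obtain V where V: "openin Y V" "y\<^sub>0 \<in> V"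
    and avoids: "\<forall>f\<in>F. \<forall>v\<in>V. actY f v \<in> C \<longrightarrow> actY f y\<^sub>0 \<in> C"
    using G_flow_nbhd_avoiding_closed[OF flow_Y C(1) F y\<^sub>0] by blast
  define F\<^sub>1 where "F\<^sub>1 = {f \<in> F. actY f y\<^sub>0 \<in> C}"
  have "separated D F\<^sub>1"
    by (rule separated_if_translates_in_wandering[OF flow_Y y\<^sub>0 differences wandering])
       (simp add: F\<^sub>1_def)
  have "finite ((\<lambda>(d, f). d + f) ` (D \<times> F\<^sub>1))" using D F by (simp add: F\<^sub>1_def)
  then obtain S where S: "separated ((\<lambda>(d, f). d + f) ` (D \<times> F\<^sub>1)) S"
    and S_cover: "{actY (- s) v |s v. s \<in> S \<and> v \<in> V} = topspace Y"
    using scp V unfolding separated_covering_property_def by blast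
  have "U' \<subseteq> U" "\<pi> ` U' \<subseteq> C" "V \<subseteq> topspace Y"
    using C(2) openin_subset[OF V(1)] by (auto simp: U'_def)
  moreover have "\<forall>f\<in>F. \<forall>v\<in>V. actY f v \<in> C \<longrightarrow> f \<in> F\<^sub>1" using avoids by (simp add: F\<^sub>1_def)
  ultimately have "{actX (- g) u |g u. g \<in> (\<lambda>(f, s). f + s) ` (F\<^sub>1 \<times> S) \<and> u \<in> U} = topspace X"
    by (rule covering_lift[OF _ U_sub F_cover _ _ S_cover])
  with separated_add[OF \<open>separated D F\<^sub>1\<close> S]
  show "\<exists>S. separated D S \<and> {actX (- s) x |s x. s \<in> S \<and> x \<in> U} = topspace X" by blast
qed

end

theorem proposition2p7:
  fixes actX :: "'g::group_add \<Rightarrow> 'a \<Rightarrow> 'a"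
    and actY :: "'g \<Rightarrow> 'b \<Rightarrow> 'b"
    and X :: "'a topology" and Y :: "'b topology"
    and \<pi> :: "'a \<Rightarrow> 'b"
  assumes "minimal_flow actX X"
    and "minimal_flow actY Y"
    and "essentially_free actY Y"
    and "continuous_map X Y \<pi>"
    and "\<pi> ` topspace X = topspace Y"
    and "\<forall>g. \<forall>x\<in>topspace X. \<pi> (actX g x) = actY g (\<pi> x)"
    and "separated_covering_property actY Y"
  shows "separated_covering_property actX X"
proof -
  interpret factor_map actX actY X Y \<pi>
    using assms by unfold_locales (auto simp: minimal_flow_def)
  show ?thesis using assms(3,7) by (rule separated_covering_property_lift)
qed

end
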